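(* Let $\pi$ be an irreducible bounded $*$-representation of $\mathcal{A}(\Sigma^{2n+1}_q)$ on a Hilbert space $\mathcal{H}$ with $\pi(y_{n+1})\ne0$. Then: (i) $\pi(y_{n+1})$ is injective; (ii) there exists a vector $\xi\neq0$ in $\mathcal{H}$ such that $\pi(y_i)\xi=0$ for all $1\le i\le n$.
   Context: Let $0<q<1$, $n\ge1$. $\mathcal{A}(\Sigma^{2n+1}_q)$ is the quotient of the quantum sphere algebra $\mathcal{A}(S^{4n-1}_q)$ (the complex unital $*$-algebra generated by $x_1,\dots,x_n,y_1,\dots,y_n$ and adjoints subject to: $x_ix_j=q^{-1}x_jx_i$ ($i<j$); $y_iy_j=q^{-1}y_jy_i$ ($i>j$); $x_iy_j=q^{-1}y_jx_i$ ($i\ne j$); $y_ix_i=q^2x_iy_i+(q^2-1)\sum_{k=1}^{i-1}q^{i-k}x_ky_k$; $x_ix_i^*=x_i^*x_i+(1-q^2)\sum_{k=1}^{i-1}x_k^*x_k$; $y_iy_i^*=y_i^*y_i+(1-q^2)\{q^{2(n+1-i)}x_i^*x_i+\sum_{k=1}^n x_k^*x_k+\sum_{k=i+1}^n y_k^*y_k\}$; $x_iy_i^*=q^2y_i^*x_i$; $x_ix_j^*=qx_j^*x_i$ ($i\ne j$); $y_iy_j^*=qy_j^*y_i-(q^2-1)q^{2n+2-i-j}x_i^*x_j$ ($i\neq j$); $x_iy_j^*=qy_j^*x_i$ ($i<j$); $x_iy_j^*=qy_j^*x_i+(q^2-1)q^{i-j}y_i^*x_j$ ($i>j$); $\sum_{i=1}^n(x_i^*x_i+y_i^*y_i)=1$)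 by the two-sided $*$-ideal generated by $x_1,\dots,x_{n-1}$; in it $y_1,\dots,y_n$ denote the images of $y_1,\dots,y_n$ and $y_{n+1}$ the image of $x_n$. In this quotient $y_{n+1}$ is normal and (with adjoints): $y_iy_j=q^{-1}y_jy_i$, $y_i^*y_j=q^{-1}y_jy_i^*$ for $i>j$, $(i,j)\ne(n+1,n)$; $y_{n+1}y_n=q^{-2}y_ny_{n+1}$, $y_{n+1}^*y_n=q^{-2}y_ny_{n+1}^*$; $[y_i,y_i^*]=(1-q^2)\sum_{k=i+1}^{n+1}y_k^*y_k$ ($i\ne n$); $[y_n,y_n^*]=(1-q^4)y_{n+1}^*y_{n+1}$; $\sum_{i=1}^{n+1}y_i^*y_i=1$. *)

theory Defs
  imports "HOL-Analysis.Analysis"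
begin

text \<open>The inner product is conjugate-linear in the first and linear in the second argument.\<close>

definition cnorm :: "('h \<Rightarrow> 'h \<Rightarrow> complex) \<Rightarrow> 'h \<Rightarrow> real" where
  "cnorm cinner x = sqrt (Re (cinner x x))"

locale complex_hilbert =
  fixes scaleC :: "complex \<Rightarrow> 'h::ab_group_add \<Rightarrow> 'h"
    and cinner :: "'h \<Rightarrow> 'h \<Rightarrow> complex"
  assumes scaleC_add_right: "scaleC a (x + y) = scaleC a x + scaleC a y"
    and scaleC_add_left: "scaleC (a + b) x = scaleC a x + scaleC b x"
    and scaleC_scaleC: "scaleC a (scaleC b x) = scaleC (a * b) x"
    and scaleC_one: "scaleC 1 x = x"
    and cinner_cnj: "cinner x y = cnj (cinner y x)"
    and cinner_add_right: "cinner x (y + z) = cinner x y + cinner x z"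
    and cinner_scaleC_right: "cinner x (scaleC a y) = a * cinner x y"
    and cinner_nonneg: "0 \<le> Re (cinner x x)"
    and cinner_eq_zero: "cinner x x = 0 \<Longrightarrow> x = 0"
    and complete: "(\<forall>e>0. \<exists>N. \<forall>m\<ge>N. \<forall>k\<ge>N. cnorm cinner (s m - s k) < e)
                     \<Longrightarrow> \<exists>v. (\<lambda>k. cnorm cinner (s k - v)) \<longlonglongrightarrow> 0"

definition bounded_op ::
  "(complex \<Rightarrow> 'h::ab_group_add \<Rightarrow> 'h) \<Rightarrow> ('h \<Rightarrow> 'h \<Rightarrow> complex) \<Rightarrow> ('h \<Rightarrow> 'h) \<Rightarrow> bool" where
  "bounded_op scaleC cinner T \<longleftrightarrow>
     (\<forall>x y. T (x + y) = T x + T y) \<and> (\<forall>a x. T (scaleC a x) = scaleC a (T x)) \<and>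
     (\<exists>C. \<forall>x. cnorm cinner (T x) \<le> C * cnorm cinner x)"

definition is_adjoint :: "('h \<Rightarrow> 'h \<Rightarrow> complex) \<Rightarrow> ('h \<Rightarrow> 'h) \<Rightarrow> ('h \<Rightarrow> 'h) \<Rightarrow> bool" where
  "is_adjoint cinner T S \<longleftrightarrow> (\<forall>x y. cinner (T x) y = cinner x (S y))"

definition closed_subspace ::
  "(complex \<Rightarrow> 'h::ab_group_add \<Rightarrow> 'h) \<Rightarrow> ('h \<Rightarrow> 'h \<Rightarrow> complex) \<Rightarrow> 'h set \<Rightarrow> bool" where
  "closed_subspace scaleC cinner M \<longleftrightarrow>
     0 \<in> M \<and> (\<forall>x\<in>M. \<forall>y\<in>M. x + y \<in> M) \<and> (\<forall>a. \<forall>x\<in>M. scaleC a x \<in> M) \<and>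
     (\<forall>s v. (\<forall>k. s k \<in> M) \<and> (\<lambda>k. cnorm cinner (s k - v)) \<longlonglongrightarrow> 0 \<longrightarrow> v \<in> M)"

text \<open>A *-representation of the universal *-algebra A(S^{4n-1}_q) (generators
x_1..x_n, y_1..y_n) is the same as an assignment of bounded operators
X i = pi(x_i), Y i = pi(y_i) (i = 1..n) with adjoints Xs i = pi(x_i^*), Ys i = pi(y_i^*)
satisfying the defining relations (the adjoint relations then hold automatically).\<close>

definition sphere_rep ::
  "(complex \<Rightarrow> 'h::ab_group_add \<Rightarrow> 'h) \<Rightarrow> ('h \<Rightarrow> 'h \<Rightarrow> complex) \<Rightarrow> nat \<Rightarrow> real \<Rightarrow>
   (nat \<Rightarrow> 'h \<Rightarrow> 'h) \<Rightarrow> (nat \<Rightarrow> 'h \<Rightarrow> 'h) \<Rightarrow> (nat \<Rightarrow> 'h \<Rightarrow> 'h) \<Rightarrow> (nat \<Rightarrow> 'h \<Rightarrow> 'h) \<Rightarrow> bool" where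
  "sphere_rep scaleC cinner n q X Xs Y Ys \<longleftrightarrow>
   (let Q = complex_of_real q in
   (\<forall>i\<in>{1..n}. bounded_op scaleC cinner (X i) \<and> bounded_op scaleC cinner (Y i) \<and>
       is_adjoint cinner (X i) (Xs i) \<and> is_adjoint cinner (Y i) (Ys i)) \<and>
   (\<forall>i\<in>{1..n}. \<forall>j\<in>{1..n}. \<forall>v.
     (i < j \<longrightarrow> X i (X j v) = scaleC (inverse Q) (X j (X i v))) \<and>
     (i > j \<longrightarrow> Y i (Y j v) = scaleC (inverse Q) (Y j (Y i v))) \<and>
     (i \<noteq> j \<longrightarrow> X i (Y j v) = scaleC (inverse Q) (Y j (X i v))) \<and>
     (i \<noteq> j \<longrightarrow> X i (Xs j v) = scaleC Q (Xs j (X i v))) \<and>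
     (i \<noteq> j \<longrightarrow> Y i (Ys j v) = scaleC Q (Ys j (Y i v))
                    - scaleC ((Q^2 - 1) * Q ^ (2*n + 2 - i - j)) (Xs i (X j v))) \<and>
     (i < j \<longrightarrow> X i (Ys j v) = scaleC Q (Ys j (X i v))) \<and>
     (i > j \<longrightarrow> X i (Ys j v) = scaleC Q (Ys j (X i v))
                    + scaleC ((Q^2 - 1) * Q ^ (i - j)) (Ys i (X j v)))) \<and>
   (\<forall>i\<in>{1..n}. \<forall>v.
     Y i (X i v) = scaleC (Q^2) (X i (Y i v))
        + scaleC (Q^2 - 1) (\<Sum>k\<in>{1..<i}. scaleC (Q ^ (i - k)) (X k (Y k v))) \<and>
     X i (Xs i v) = Xs i (X i v) + scaleC (1 - Q^2) (\<Sum>k\<in>{1..<i}. Xs k (X k v)) \<and>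
     Y i (Ys i v) = Ys i (Y i v) + scaleC (1 - Q^2)
        (scaleC (Q ^ (2 * (n + 1 - i))) (Xs i (X i v))
         + (\<Sum>k\<in>{1..n}. Xs k (X k v)) + (\<Sum>k\<in>{i<..n}. Ys k (Y k v))) \<and>
     X i (Ys i v) = scaleC (Q^2) (Ys i (X i v))) \<and>
   (\<forall>v. (\<Sum>i\<in>{1..n}. Xs i (X i v) + Ys i (Y i v)) = v))"

text \<open>A representation of the quotient A(Sigma^{2n+1}_q) is a representation of
A(S^{4n-1}_q) vanishing on the *-ideal generated by x_1..x_{n-1}; then
pi(y_i) = Y i for i = 1..n and pi(y_{n+1}) = X n.\<close>

definition sigma_rep ::
  "(complex \<Rightarrow> 'h::ab_group_add \<Rightarrow> 'h) \<Rightarrow> ('h \<Rightarrow> 'h \<Rightarrow> complex) \<Rightarrow> nat \<Rightarrow> real \<Rightarrow>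
   (nat \<Rightarrow> 'h \<Rightarrow> 'h) \<Rightarrow> (nat \<Rightarrow> 'h \<Rightarrow> 'h) \<Rightarrow> (nat \<Rightarrow> 'h \<Rightarrow> 'h) \<Rightarrow> (nat \<Rightarrow> 'h \<Rightarrow> 'h) \<Rightarrow> bool" where
  "sigma_rep scaleC cinner n q X Xs Y Ys \<longleftrightarrow>
     sphere_rep scaleC cinner n q X Xs Y Ys \<and> (\<forall>i\<in>{1..<n}. \<forall>v. X i v = 0)"

text \<open>Irreducible: the only closed subspaces invariant under the image of the
algebra (equivalently, under all generators and their adjoints) are 0 and H.\<close>

definition irreducible_rep ::
  "(complex \<Rightarrow> 'h::ab_group_add \<Rightarrow> 'h) \<Rightarrow> ('h \<Rightarrow> 'h \<Rightarrow> complex) \<Rightarrow> nat \<Rightarrow>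
   (nat \<Rightarrow> 'h \<Rightarrow> 'h) \<Rightarrow> (nat \<Rightarrow> 'h \<Rightarrow> 'h) \<Rightarrow> (nat \<Rightarrow> 'h \<Rightarrow> 'h) \<Rightarrow> (nat \<Rightarrow> 'h \<Rightarrow> 'h) \<Rightarrow> bool" where
  "irreducible_rep scaleC cinner n X Xs Y Ys \<longleftrightarrow>
     (\<forall>M. closed_subspace scaleC cinner M \<and>
          (\<forall>i\<in>{1..n}. \<forall>v\<in>M. X i v \<in> M \<and> Xs i v \<in> M \<and> Y i v \<in> M \<and> Ys i v \<in> M)
          \<longrightarrow> M = {0} \<or> M = UNIV)"

end

theory Submission
  imports Defs
begin

text \<open>Write \<open>Z = \<pi>(y\<^sub>n\<^sub>+\<^sub>1)\<close>. As \<open>x\<^sub>1, \<dots>, x\<^sub>n\<^sub>-\<^sub>1\<close> are killed, the sphere relation becomes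
\<open>|Z v|\<^sup>2 + D v = |v|\<^sup>2\<close> with the defect \<open>D v = \<Sum>\<^sub>j |Y\<^sub>j v|\<^sup>2\<close>, and \<open>Y\<^sub>j Z = q Z Y\<^sub>j\<close> (\<open>j < n\<close>),
\<open>Y\<^sub>n Z = q\<^sup>2 Z Y\<^sub>n\<close>. So \<open>Z\<close> is a normal contraction and \<open>ker Z\<close> is a closed invariant
subspace, which irreducibility forces to be \<open>0\<close>.

For the common kernel vector, the commutation relations give \<open>D (Z v) \<le> q\<^sup>2 |Z|\<^sup>2 D v\<close>. This
first rules out \<open>|Z| \<le> q\<close> (such a bound improves itself geometrically, forcing \<open>Z = 0\<close>),
and then, for \<open>v\<close> with \<open>|Z v| > q |v|\<close>, bounds \<open>|Z\<^sup>m v|\<^sup>2\<close> below by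
\<open>|v|\<^sup>2 - D v / (1 - q\<^sup>2) > 0\<close>. For a normal contraction this makes \<open>((Z\<^sup>*Z)\<^sup>m v)\<close> a
Cauchy sequence; its limit \<open>w \<noteq> 0\<close> satisfies \<open>|Z w| = |w|\<close>, i.e. \<open>D w = 0\<close>.\<close>

context complex_hilbert
begin

definition sqnorm :: "'h \<Rightarrow> real" where
  "sqnorm x = Re (cinner x x)"

lemma cnorm_eq_sqrt_sqnorm: "cnorm cinner x = sqrt (sqnorm x)"
  by (simp add: cnorm_def sqnorm_def)

lemma scaleC_zero_right [simp]: "scaleC a 0 = 0"
  using scaleC_add_right[of a 0 0] by simp

lemma scaleC_zero_left [simp]: "scaleC 0 x = 0"
  using scaleC_add_left[of 0 0 x] by simp

lemma scaleC_eq_0_iff: "scaleC a x = 0 \<longleftrightarrow> a = 0 \<or> x = 0"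
proof (cases "a = 0")
  case False
  have "x = scaleC (inverse a) (scaleC a x)"
    using False by (simp add: scaleC_scaleC scaleC_one)
  then show ?thesis using False by auto
qed simp

lemma cinner_zero_right [simp]: "cinner x 0 = 0"
  using cinner_add_right[of x 0 0] by simp

lemma cinner_diff_right: "cinner x (y - z) = cinner x y - cinner x z"
  using cinner_add_right[of x "y - z" z] by simp

lemma cinner_add_left: "cinner (x + y) z = cinner x z + cinner y z"
  by (metis cinner_add_right cinner_cnj complex_cnj_add)

lemma cinner_diff_left: "cinner (x - y) z = cinner x z - cinner y z"
  by (metis cinner_diff_right cinner_cnj complex_cnj_diff)

lemma cinner_zero_left [simp]: "cinner 0 x = 0"
  by (metis cinner_cnj cinner_zero_right complex_cnj_zero)

lemma cinner_scaleC_left: "cinner (scaleC a x) y = cnj a * cinner x y"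
  by (metis cinner_cnj cinner_scaleC_right complex_cnj_mult)

lemma cinner_sum_right: "finite A \<Longrightarrow> cinner x (\<Sum>i\<in>A. f i) = (\<Sum>i\<in>A. cinner x (f i))"
  by (induction A rule: finite_induct) (auto simp: cinner_add_right)

lemma cinner_self: "cinner x x = complex_of_real (sqnorm x)"
proof -
  have "Im (cinner x x) = 0"
    using cinner_cnj[of x x] by (metis cnj.sel(2) equal_neg_zero)
  then show ?thesis by (simp add: sqnorm_def complex_eq_iff)
qed

lemma sqnorm_nonneg: "0 \<le> sqnorm x"
  using cinner_nonneg by (simp add: sqnorm_def)

lemma sqnorm_eq_0_iff: "sqnorm x = 0 \<longleftrightarrow> x = 0"
  using cinner_self[of x] cinner_eq_zero[of x] by auto

lemma sqnorm_le_0_iff: "sqnorm x \<le> 0 \<longleftrightarrow> x = 0"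
  using sqnorm_nonneg[of x] sqnorm_eq_0_iff[of x] by linarith

lemma sqnorm_scaleC: "sqnorm (scaleC a x) = (cmod a)\<^sup>2 * sqnorm x"
proof -
  have "cinner (scaleC a x) (scaleC a x) = (a * cnj a) * cinner x x"
    by (simp add: cinner_scaleC_left cinner_scaleC_right)
  also have "\<dots> = complex_of_real ((cmod a)\<^sup>2 * sqnorm x)"
    by (simp add: complex_norm_square[symmetric] cinner_self)
  finally show ?thesis by (simp add: sqnorm_def)
qed

lemma sqnorm_add: "sqnorm (x + y) = sqnorm x + sqnorm y + 2 * Re (cinner x y)"
proof -
  have "Re (cinner y x) = Re (cinner x y)"
    by (subst cinner_cnj) simp
  then show ?thesis
    by (simp add: sqnorm_def cinner_add_left cinner_add_right)
qed

lemma sqnorm_diff: "sqnorm (x - y) = sqnorm x + sqnorm y - 2 * Re (cinner x y)"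
proof -
  have "Re (cinner y x) = Re (cinner x y)"
    by (subst cinner_cnj) simp
  then show ?thesis
    by (simp add: sqnorm_def cinner_diff_left cinner_diff_right)
qed

lemma sqnorm_add_le: "sqnorm (x + y) \<le> 2 * sqnorm x + 2 * sqnorm y"
  using sqnorm_add[of x y] sqnorm_diff[of x y] sqnorm_nonneg[of "x - y"] by linarith

lemma sqnorm_minus_commute: "sqnorm (x - y) = sqnorm (y - x)"
  using sqnorm_diff[of x y] sqnorm_diff[of y x] cinner_cnj[of x y] by simp

lemma tendsto_sqnorm_iff_cnorm:
  "(\<lambda>k. sqnorm (s k)) \<longlonglongrightarrow> 0 \<longleftrightarrow> (\<lambda>k. cnorm cinner (s k)) \<longlonglongrightarrow> 0"
proof
  assume "(\<lambda>k. sqnorm (s k)) \<longlonglongrightarrow> 0"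
  then have "(\<lambda>k. sqrt (sqnorm (s k))) \<longlonglongrightarrow> sqrt 0"
    by (rule tendsto_real_sqrt)
  then show "(\<lambda>k. cnorm cinner (s k)) \<longlonglongrightarrow> 0"
    by (simp add: cnorm_eq_sqrt_sqnorm)
next
  assume "(\<lambda>k. cnorm cinner (s k)) \<longlonglongrightarrow> 0"
  then have "(\<lambda>k. (cnorm cinner (s k))\<^sup>2) \<longlonglongrightarrow> 0\<^sup>2"
    by (rule tendsto_power)
  then show "(\<lambda>k. sqnorm (s k)) \<longlonglongrightarrow> 0"
    by (simp add: cnorm_eq_sqrt_sqnorm sqnorm_nonneg)
qed

lemma eq_if_cinner_eq: "(\<And>z. cinner z a = cinner z b) \<Longrightarrow> a = b"
  using cinner_eq_zero[of "a - b"] by (simp add: cinner_diff_right)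

lemma adjoint_add:
  assumes "is_adjoint cinner A As"
  shows "As (x + y) = As x + As y"
  using assms by (intro eq_if_cinner_eq) (metis is_adjoint_def cinner_add_right)

lemma adjoint_diff:
  assumes "is_adjoint cinner A As"
  shows "As (x - y) = As x - As y"
  using adjoint_add[OF assms, of "x - y" y] by (simp add: eq_diff_eq)

lemma adjoint_zero:
  assumes "is_adjoint cinner A As"
  shows "As 0 = 0"
  using adjoint_diff[OF assms, of 0 0] by simp

lemma adjoint_of_zero:
  assumes "is_adjoint cinner A As" and "\<And>v. A v = 0"
  shows "As y = 0"
  using assms cinner_eq_zero[of "As y"] unfolding is_adjoint_def by (metis cinner_zero_left)

lemma is_adjoint_sym: "is_adjoint cinner A As \<Longrightarrow> is_adjoint cinner As A"
  unfolding is_adjoint_def by (metis cinner_cnj)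

lemma is_adjoint_comp:
  "is_adjoint cinner A As \<Longrightarrow> is_adjoint cinner B Bs \<Longrightarrow> is_adjoint cinner (A \<circ> B) (Bs \<circ> As)"
  unfolding is_adjoint_def by simp

lemma is_adjoint_funpow: "is_adjoint cinner A As \<Longrightarrow> is_adjoint cinner (A ^^ m) (As ^^ m)"
proof (induction m)
  case 0
  then show ?case by (simp add: is_adjoint_def)
next
  case (Suc m)
  then show ?case
    using is_adjoint_comp[OF Suc.prems Suc.IH] by (metis funpow.simps(2) funpow_Suc_right)
qed

lemma sqnorm_eq_cinner_adjoint:
  "is_adjoint cinner A As \<Longrightarrow> cinner v (As (A v)) = complex_of_real (sqnorm (A v))"
  unfolding is_adjoint_def by (metis cinner_self)

lemma kernel_closed_subspace:
  assumes T: "bounded_op scaleC cinner T"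
  shows "closed_subspace scaleC cinner {v. T v = 0}"
proof -
  have add: "T (x + y) = T x + T y" and scale: "T (scaleC a x) = scaleC a (T x)" for a x y
    using T by (simp_all add: bounded_op_def)
  have diff: "T (x - y) = T x - T y" for x y
    using add[of "x - y" y] by (simp add: eq_diff_eq)
  obtain C where C: "\<And>x. cnorm cinner (T x) \<le> C * cnorm cinner x"
    using T unfolding bounded_op_def by blast
  have "T v = 0" if s: "\<forall>k. T (s k) = 0" and lim: "(\<lambda>k. cnorm cinner (s k - v)) \<longlonglongrightarrow> 0" for s v
  proof -
    have "cnorm cinner (T v) \<le> C * cnorm cinner (s k - v)" for k
      using C[of "s k - v"] s sqnorm_minus_commute[of 0 "T v"] by (simp add: diff cnorm_eq_sqrt_sqnorm)
    moreover have "(\<lambda>k. C * cnorm cinner (s k - v)) \<longlonglongrightarrow> C * 0"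
      by (intro tendsto_intros lim)
    ultimately have "cnorm cinner (T v) \<le> 0"
      by (intro tendsto_lowerbound[of "\<lambda>k. C * cnorm cinner (s k - v)"]) auto
    then show ?thesis
      by (simp add: cnorm_eq_sqrt_sqnorm sqnorm_le_0_iff)
  qed
  moreover have "T 0 = 0"
    using diff[of 0 0] by simp
  ultimately show ?thesis
    unfolding closed_subspace_def by (auto simp: add scale)
qed

lemma fixed_point_of_convergent_iterates:
  assumes diff: "\<And>x y. T (x - y) = T x - T y"
    and contraction: "\<And>x. sqnorm (T x) \<le> sqnorm x"
    and lim: "(\<lambda>k. sqnorm ((T ^^ k) v - w)) \<longlonglongrightarrow> 0"
  shows "T w = w"
proof -
  have bound: "sqnorm (T w - w) \<le> 2 * sqnorm ((T ^^ k) v - w) + 2 * sqnorm ((T ^^ Suc k) v - w)" for k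
  proof -
    have "sqnorm (T w - w) = sqnorm ((T w - T ((T ^^ k) v)) + ((T ^^ Suc k) v - w))"
      by simp
    also have "\<dots> \<le> 2 * sqnorm (T w - T ((T ^^ k) v)) + 2 * sqnorm ((T ^^ Suc k) v - w)"
      by (rule sqnorm_add_le)
    also have "sqnorm (T w - T ((T ^^ k) v)) \<le> sqnorm ((T ^^ k) v - w)"
      using contraction[of "w - (T ^^ k) v"] by (simp add: diff sqnorm_minus_commute[of w])
    finally show ?thesis by simp
  qed
  have "(\<lambda>k. 2 * sqnorm ((T ^^ k) v - w) + 2 * sqnorm ((T ^^ Suc k) v - w)) \<longlonglongrightarrow> 2 * 0 + 2 * 0"
    by (intro tendsto_intros lim LIMSEQ_Suc[OF lim])
  then have "sqnorm (T w - w) \<le> 0"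
    using bound by (intro tendsto_lowerbound) auto
  then show ?thesis
    by (simp add: sqnorm_le_0_iff)
qed

end

locale normal_contraction = complex_hilbert scaleC cinner
  for scaleC :: "complex \<Rightarrow> 'h::ab_group_add \<Rightarrow> 'h" and cinner :: "'h \<Rightarrow> 'h \<Rightarrow> complex" +
  fixes Z Zs :: "'h \<Rightarrow> 'h"
  assumes adjoint: "is_adjoint cinner Z Zs"
    and normal: "Z (Zs x) = Zs (Z x)"
    and contraction: "sqnorm (Z x) \<le> sqnorm x"
begin

lemma sqnorm_adjoint: "sqnorm (Zs x) = sqnorm (Z x)"
proof -
  have "complex_of_real (sqnorm (Zs x)) = cinner x (Z (Zs x))"
    using sqnorm_eq_cinner_adjoint[OF is_adjoint_sym[OF adjoint]] by simp
  also have "\<dots> = complex_of_real (sqnorm (Z x))"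
    by (simp add: normal sqnorm_eq_cinner_adjoint[OF adjoint])
  finally show ?thesis by simp
qed

lemma funpow_adjoint_comp: "((Zs \<circ> Z) ^^ m) x = (Zs ^^ m) ((Z ^^ m) x)"
proof (induction m arbitrary: x)
  case 0
  then show ?case by simp
next
  case (Suc m)
  have commute: "(Z ^^ m) (Zs y) = Zs ((Z ^^ m) y)" for y
    by (induction m) (simp_all add: normal)
  have "((Zs \<circ> Z) ^^ Suc m) x = ((Zs \<circ> Z) ^^ m) (Zs (Z x))"
    by (simp only: funpow_Suc_right comp_apply)
  also have "\<dots> = (Zs ^^ m) (Zs ((Z ^^ m) (Z x)))"
    by (simp only: Suc.IH commute)
  also have "\<dots> = (Zs ^^ Suc m) ((Z ^^ Suc m) x)"
    by (simp only: funpow_Suc_right comp_apply)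
  finally show ?case .
qed

lemma cinner_adjoint_comp_iterates:
  "cinner (((Zs \<circ> Z) ^^ m) v) (((Zs \<circ> Z) ^^ k) v) = complex_of_real (sqnorm ((Z ^^ (m + k)) v))"
proof -
  have "is_adjoint cinner (Zs \<circ> Z) (Zs \<circ> Z)"
    using is_adjoint_comp[OF is_adjoint_sym[OF adjoint] adjoint] .
  then have "cinner (((Zs \<circ> Z) ^^ m) v) (((Zs \<circ> Z) ^^ k) v) = cinner v (((Zs \<circ> Z) ^^ (m + k)) v)"
    using is_adjoint_funpow unfolding is_adjoint_def by (simp add: funpow_add)
  also have "\<dots> = cinner v ((Zs ^^ (m + k)) ((Z ^^ (m + k)) v))"
    by (simp add: funpow_adjoint_comp)
  also have "\<dots> = complex_of_real (sqnorm ((Z ^^ (m + k)) v))"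
    by (rule sqnorm_eq_cinner_adjoint[OF is_adjoint_funpow[OF adjoint]])
  finally show ?thesis .
qed

lemma sqnorm_adjoint_comp_iterate: "sqnorm (((Zs \<circ> Z) ^^ m) v) = sqnorm ((Z ^^ (m + m)) v)"
  unfolding sqnorm_def[of "((Zs \<circ> Z) ^^ m) v"] cinner_adjoint_comp_iterates by simp

lemma adjoint_comp_iterates_Cauchy:
  "\<forall>e>0. \<exists>N. \<forall>m\<ge>N. \<forall>k\<ge>N. cnorm cinner (((Zs \<circ> Z) ^^ m) v - ((Zs \<circ> Z) ^^ k) v) < e"
proof (intro allI impI)
  fix e :: real
  assume e: "0 < e"
  define a where "a j = sqnorm ((Z ^^ j) v)" for j
  have "decseq a"
    unfolding decseq_Suc_iff a_def by (simp add: contraction)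
  then obtain L where "a \<longlonglongrightarrow> L" and L: "\<forall>j. L \<le> a j"
    using decseq_convergent[of a 0] by (auto simp: a_def sqnorm_nonneg)
  moreover have "0 < e\<^sup>2 / 2"
    using e by simp
  ultimately obtain N where N: "\<And>j. j \<ge> N \<Longrightarrow> \<bar>a j - L\<bar> < e\<^sup>2 / 2"
    unfolding LIMSEQ_iff by (metis real_norm_def)
  have "cnorm cinner (((Zs \<circ> Z) ^^ m) v - ((Zs \<circ> Z) ^^ k) v) < e" if "m \<ge> N" "k \<ge> N" for m k
  proof -
    have "sqnorm (((Zs \<circ> Z) ^^ m) v - ((Zs \<circ> Z) ^^ k) v) = a (m + m) + a (k + k) - 2 * a (m + k)"
      unfolding sqnorm_diff sqnorm_adjoint_comp_iterate a_def cinner_adjoint_comp_iterates by simp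
    also have "\<dots> < e\<^sup>2"
      using N[of "m + m"] N[of "k + k"] L[rule_format, of "m + k"] that
      unfolding abs_less_iff by linarith
    finally show ?thesis
      using e by (simp add: cnorm_eq_sqrt_sqnorm real_less_lsqrt sqnorm_nonneg)
  qed
  then show "\<exists>N. \<forall>m\<ge>N. \<forall>k\<ge>N. cnorm cinner (((Zs \<circ> Z) ^^ m) v - ((Zs \<circ> Z) ^^ k) v) < e"
    by blast
qed

lemma exists_isometric_vector:
  assumes c: "0 < c" and lower: "\<And>m. c \<le> sqnorm ((Z ^^ m) v)"
  shows "\<exists>w. w \<noteq> 0 \<and> sqnorm (Z w) = sqnorm w"
proof -
  obtain w where "(\<lambda>k. cnorm cinner (((Zs \<circ> Z) ^^ k) v - w)) \<longlonglongrightarrow> 0"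
    using complete[OF adjoint_comp_iterates_Cauchy] by blast
  then have lim: "(\<lambda>k. sqnorm (((Zs \<circ> Z) ^^ k) v - w)) \<longlonglongrightarrow> 0"
    by (simp add: tendsto_sqnorm_iff_cnorm)
  have "(Zs \<circ> Z) w = w"
  proof (rule fixed_point_of_convergent_iterates[OF _ _ lim])
    show "(Zs \<circ> Z) (x - y) = (Zs \<circ> Z) x - (Zs \<circ> Z) y" for x y
      using adjoint_diff[OF adjoint] adjoint_diff[OF is_adjoint_sym[OF adjoint]] by simp
    show "sqnorm ((Zs \<circ> Z) x) \<le> sqnorm x" for x
      using contraction[of x] contraction[of "Z x"] by (simp add: sqnorm_adjoint)
  qed
  then have "sqnorm (Z w) = sqnorm w"
    using sqnorm_eq_cinner_adjoint[OF adjoint, of w] cinner_self[of w] by simp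
  moreover have "w \<noteq> 0"
  proof
    assume "w = 0"
    then have "(\<lambda>k. sqnorm (((Zs \<circ> Z) ^^ k) v)) \<longlonglongrightarrow> 0"
      using lim by simp
    then have "c \<le> 0"
      using lower by (intro tendsto_lowerbound[of "\<lambda>k. sqnorm (((Zs \<circ> Z) ^^ k) v)"])
        (auto simp: sqnorm_adjoint_comp_iterate)
    then show False
      using c by simp
  qed
  ultimately show ?thesis by blast
qed

end

locale sigma_representation = complex_hilbert scaleC cinner
  for scaleC :: "complex \<Rightarrow> 'h::ab_group_add \<Rightarrow> 'h" and cinner :: "'h \<Rightarrow> 'h \<Rightarrow> complex" +
  fixes n :: nat and q :: real and X Xs Y Ys :: "nat \<Rightarrow> 'h \<Rightarrow> 'h"
  assumes q_pos: "0 < q" and q_less_1: "q < 1" and n_ge_1: "1 \<le> n"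
    and rep: "sigma_rep scaleC cinner n q X Xs Y Ys"
begin

abbreviation Q :: complex where
  "Q \<equiv> complex_of_real q"

lemma generators_bounded_adjoint:
  "i \<in> {1..n} \<Longrightarrow> bounded_op scaleC cinner (X i) \<and> bounded_op scaleC cinner (Y i) \<and>
     is_adjoint cinner (X i) (Xs i) \<and> is_adjoint cinner (Y i) (Ys i)"
  using rep unfolding sigma_rep_def sphere_rep_def Let_def by blast

lemma offdiagonal_relations:
  "i \<in> {1..n} \<Longrightarrow> j \<in> {1..n} \<Longrightarrow>
     (i \<noteq> j \<longrightarrow> X i (Y j v) = scaleC (inverse Q) (Y j (X i v))) \<and>
     (i > j \<longrightarrow> X i (Ys j v) = scaleC Q (Ys j (X i v))
                    + scaleC ((Q\<^sup>2 - 1) * Q ^ (i - j)) (Ys i (X j v)))"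
  using rep unfolding sigma_rep_def sphere_rep_def Let_def by blast

lemma diagonal_relations:
  "i \<in> {1..n} \<Longrightarrow>
     Y i (X i v) = scaleC (Q\<^sup>2) (X i (Y i v))
        + scaleC (Q\<^sup>2 - 1) (\<Sum>k\<in>{1..<i}. scaleC (Q ^ (i - k)) (X k (Y k v))) \<and>
     X i (Xs i v) = Xs i (X i v) + scaleC (1 - Q\<^sup>2) (\<Sum>k\<in>{1..<i}. Xs k (X k v)) \<and>
     X i (Ys i v) = scaleC (Q\<^sup>2) (Ys i (X i v))"
  using rep unfolding sigma_rep_def sphere_rep_def Let_def by blast

lemma sphere_relation: "(\<Sum>i\<in>{1..n}. Xs i (X i v) + Ys i (Y i v)) = v"
  using rep unfolding sigma_rep_def sphere_rep_def Let_def by blast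

lemma n_mem: "n \<in> {1..n}"
  using n_ge_1 by simp

lemma X_vanish: "1 \<le> k \<Longrightarrow> k < n \<Longrightarrow> X k v = 0"
  using rep unfolding sigma_rep_def by auto

lemma Xs_vanish: "1 \<le> k \<Longrightarrow> k < n \<Longrightarrow> Xs k v = 0"
  using adjoint_of_zero[of "X k" "Xs k"] generators_bounded_adjoint[of k] X_vanish by auto

lemma bounded_X_n: "bounded_op scaleC cinner (X n)"
  using generators_bounded_adjoint[OF n_mem] by blast

lemma adjoint_X_n: "is_adjoint cinner (X n) (Xs n)"
  using generators_bounded_adjoint[OF n_mem] by blast

lemma X_n_diff: "X n (x - y) = X n x - X n y"
  using adjoint_diff[OF is_adjoint_sym[OF adjoint_X_n]] .

lemma X_n_zero: "X n 0 = 0"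
  using X_n_diff[of 0 0] by simp

lemma Y_zero: "j \<in> {1..n} \<Longrightarrow> Y j 0 = 0"
  using adjoint_zero[OF is_adjoint_sym] generators_bounded_adjoint by blast

lemma Ys_zero: "j \<in> {1..n} \<Longrightarrow> Ys j 0 = 0"
  using adjoint_zero generators_bounded_adjoint by blast

lemma X_n_normal: "X n (Xs n v) = Xs n (X n v)"
proof -
  have "(\<Sum>k\<in>{1..<n}. Xs k (X k v)) = 0"
    by (intro sum.neutral) (auto simp: Xs_vanish)
  then show ?thesis
    using diagonal_relations[OF n_mem, of v] by simp
qed

lemma Y_n_X_n_commute: "Y n (X n v) = scaleC (Q\<^sup>2) (X n (Y n v))"
proof -
  have "(\<Sum>k\<in>{1..<n}. scaleC (Q ^ (n - k)) (X k (Y k v))) = 0"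
    by (intro sum.neutral) (auto simp: X_vanish)
  then show ?thesis
    using diagonal_relations[OF n_mem, of v] by simp
qed

lemma Y_X_n_commute:
  assumes "1 \<le> j" "j < n"
  shows "Y j (X n v) = scaleC Q (X n (Y j v))"
proof -
  have "X n (Y j v) = scaleC (inverse Q) (Y j (X n v))"
    using offdiagonal_relations[OF n_mem, of j v] assms by auto
  then show ?thesis
    using q_pos by (simp add: scaleC_scaleC scaleC_one)
qed

lemma X_n_kernel_invariant:
  assumes i: "i \<in> {1..n}" and v: "X n v = 0"
  shows "X n (X i v) = 0 \<and> X n (Xs i v) = 0 \<and> X n (Y i v) = 0 \<and> X n (Ys i v) = 0"
proof (intro conjI)
  show "X n (X i v) = 0"
    using i v X_vanish[of i v] X_n_zero by (cases "i = n") auto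
  show "X n (Xs i v) = 0"
    using i v X_n_normal[of v] Xs_vanish[of i v] X_n_zero adjoint_zero[OF adjoint_X_n]
    by (cases "i = n") auto
  show "X n (Y i v) = 0"
  proof (cases "i = n")
    case True
    then show ?thesis
      using Y_n_X_n_commute[of v] v Y_zero[OF n_mem] q_pos by (simp add: scaleC_eq_0_iff)
  next
    case False
    then show ?thesis
      using offdiagonal_relations[OF n_mem i, of v] v Y_zero[OF i] by simp
  qed
  show "X n (Ys i v) = 0"
  proof (cases "i = n")
    case True
    then show ?thesis
      using diagonal_relations[OF n_mem, of v] v Ys_zero[OF n_mem] by simp
  next
    case False
    then show ?thesis
      using offdiagonal_relations[OF n_mem i, of v] i v Ys_zero X_vanish[of i v] n_mem by auto
  qed
qed

lemma X_n_injective: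
  assumes irreducible: "irreducible_rep scaleC cinner n X Xs Y Ys"
    and nonzero: "X n \<noteq> (\<lambda>v. 0)"
  shows "inj (X n)"
proof -
  have "{v. X n v = 0} = {0} \<or> {v. X n v = 0} = UNIV"
    using irreducible kernel_closed_subspace[OF bounded_X_n] X_n_kernel_invariant
    unfolding irreducible_rep_def by blast
  moreover have "{v. X n v = 0} \<noteq> UNIV"
    using nonzero by auto
  ultimately have "X n v = 0 \<Longrightarrow> v = 0" for v
    by blast
  then show ?thesis
    by (metis injI X_n_diff right_minus_eq)
qed

definition defect :: "'h \<Rightarrow> real" where
  "defect v = (\<Sum>j\<in>{1..n}. sqnorm (Y j v))"

lemma defect_nonneg: "0 \<le> defect v"
  unfolding defect_def by (simp add: sum_nonneg sqnorm_nonneg)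

lemma sqnorm_X_n_add_defect: "sqnorm (X n v) + defect v = sqnorm v"
proof -
  have "cinner v v = (\<Sum>i\<in>{1..n}. cinner v (Xs i (X i v)) + cinner v (Ys i (Y i v)))"
    by (subst (2) sphere_relation[symmetric]) (simp add: cinner_sum_right cinner_add_right)
  also have "\<dots> = (\<Sum>i\<in>{1..n}. complex_of_real (sqnorm (X i v) + sqnorm (Y i v)))"
    by (intro sum.cong refl) (simp add: sqnorm_eq_cinner_adjoint generators_bounded_adjoint)
  finally have "sqnorm v = (\<Sum>i\<in>{1..n}. sqnorm (X i v)) + defect v"
    by (simp add: sqnorm_def sum.distrib defect_def)
  moreover have "(\<Sum>i\<in>{1..n}. sqnorm (X i v)) = sqnorm (X n v)"
  proof -
    have "{1..n} = insert n {1..<n}"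
      using n_ge_1 by auto
    moreover have "(\<Sum>i\<in>{1..<n}. sqnorm (X i v)) = 0"
      by (intro sum.neutral) (auto simp: X_vanish sqnorm_def)
    ultimately show ?thesis by simp
  qed
  ultimately show ?thesis by simp
qed

lemma sqnorm_X_n_le: "sqnorm (X n v) \<le> sqnorm v"
  using sqnorm_X_n_add_defect[of v] defect_nonneg[of v] by linarith

lemma normal_contraction_X_n: "normal_contraction scaleC cinner (X n) (Xs n)"
  by unfold_locales (simp_all add: adjoint_X_n X_n_normal sqnorm_X_n_le)

lemma defect_X_n_le:
  assumes "0 \<le> M" and bound: "\<And>x. sqnorm (X n x) \<le> M * sqnorm x"
  shows "defect (X n v) \<le> q\<^sup>2 * M * defect v"
proof -
  have "sqnorm (Y j (X n v)) \<le> q\<^sup>2 * M * sqnorm (Y j v)" if j: "j \<in> {1..n}" for j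
  proof (cases "j = n")
    case True
    have "sqnorm (Y j (X n v)) = q\<^sup>2 * q\<^sup>2 * sqnorm (X n (Y j v))"
      using Y_n_X_n_commute[of v] True q_pos by (simp add: sqnorm_scaleC norm_power power_mult_distrib)
    also have "\<dots> \<le> 1 * q\<^sup>2 * (M * sqnorm (Y j v))"
      using bound[of "Y j v"] q_pos q_less_1 assms(1)
      by (intro mult_mono) (auto simp: power_le_one sqnorm_nonneg)
    finally show ?thesis by simp
  next
    case False
    then have "sqnorm (Y j (X n v)) = q\<^sup>2 * sqnorm (X n (Y j v))"
      using Y_X_n_commute[of j v] j q_pos by (simp add: sqnorm_scaleC)
    also have "\<dots> \<le> q\<^sup>2 * (M * sqnorm (Y j v))"
      using bound by (intro mult_left_mono) auto
    finally show ?thesis by simp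
  qed
  then show ?thesis
    unfolding defect_def sum_distrib_left by (intro sum_mono) blast
qed

lemma sq_q_bounds: "0 < q\<^sup>2" "q\<^sup>2 < 1"
  using q_pos q_less_1 by (auto simp: power_less_one_iff)

lemma sq_q_less: "q\<^sup>2 < 1 - q\<^sup>2 + q ^ 4"
proof -
  have "0 < (1 - q\<^sup>2)\<^sup>2"
    using sq_q_bounds by simp
  then show ?thesis
    by (simp add: power2_eq_square power4_eq_xxxx algebra_simps)
qed

text \<open>The factor comes from \<open>|Z x|\<^sup>2 = |Z\<^sup>2 x|\<^sup>2 + D (Z x) \<le> M |Z x|\<^sup>2 + q\<^sup>2 M (|x|\<^sup>2 - |Z x|\<^sup>2)\<close>
together with \<open>1 - M + q\<^sup>2 M \<ge> 1 - q\<^sup>2 + q\<^sup>4\<close>.\<close>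

lemma X_n_bound_improve:
  assumes M: "0 \<le> M" "M \<le> q\<^sup>2" and bound: "\<And>x. sqnorm (X n x) \<le> M * sqnorm x"
  shows "sqnorm (X n x) \<le> q\<^sup>2 / (1 - q\<^sup>2 + q ^ 4) * M * sqnorm x"
proof -
  define d where "d = 1 - q\<^sup>2 + q ^ 4"
  have d: "0 < d"
    using sq_q_less sq_q_bounds unfolding d_def by linarith
  have "sqnorm (X n x) = sqnorm (X n (X n x)) + defect (X n x)"
    using sqnorm_X_n_add_defect[of "X n x"] by simp
  also have "\<dots> \<le> M * sqnorm (X n x) + q\<^sup>2 * M * defect x"
    using bound defect_X_n_le[OF M(1) bound] by (rule add_mono)
  also have "defect x = sqnorm x - sqnorm (X n x)"
    using sqnorm_X_n_add_defect[of x] by simp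
  finally have "sqnorm (X n x) * (1 - M + q\<^sup>2 * M) \<le> q\<^sup>2 * M * sqnorm x"
    by (simp add: algebra_simps)
  moreover have "sqnorm (X n x) * d \<le> sqnorm (X n x) * (1 - M + q\<^sup>2 * M)"
  proof (rule mult_left_mono[OF _ sqnorm_nonneg])
    have "M * (1 - q\<^sup>2) \<le> q\<^sup>2 * (1 - q\<^sup>2)"
      using M q_less_1 q_pos by (intro mult_right_mono) (auto simp: power_le_one)
    then show "d \<le> 1 - M + q\<^sup>2 * M"
      unfolding d_def by (simp add: algebra_simps power2_eq_square power4_eq_xxxx)
  qed
  ultimately have "sqnorm (X n x) * d \<le> q\<^sup>2 * M * sqnorm x"
    by linarith
  then show ?thesis
    using d unfolding d_def[symmetric] by (simp add: field_simps)
qed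

lemma exists_sqnorm_X_n_gt:
  assumes nonzero: "X n \<noteq> (\<lambda>v. 0)"
  shows "\<exists>v. q\<^sup>2 * sqnorm v < sqnorm (X n v)"
proof (rule ccontr)
  assume "\<nexists>v. q\<^sup>2 * sqnorm v < sqnorm (X n v)"
  then have base: "sqnorm (X n x) \<le> q\<^sup>2 * sqnorm x" for x
    by (simp add: not_less)
  define r where "r = q\<^sup>2 / (1 - q\<^sup>2 + q ^ 4)"
  have "0 < 1 - q\<^sup>2 + q ^ 4"
    using sq_q_less sq_q_bounds by linarith
  then have r: "0 \<le> r" "r < 1"
    using sq_q_less unfolding r_def by auto
  have iterated: "sqnorm (X n x) \<le> q\<^sup>2 * r ^ k * sqnorm x" for k x
  proof (induction k arbitrary: x)
    case 0
    then show ?case using base by simp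
  next
    case (Suc k)
    have "q\<^sup>2 * r ^ k \<le> q\<^sup>2"
      using r by (simp add: power_le_one mult_left_le)
    then show ?case
      using X_n_bound_improve[of "q\<^sup>2 * r ^ k", OF _ _ Suc.IH] r
      unfolding r_def[symmetric] by (simp add: mult_ac)
  qed
  have "X n x = 0" for x
  proof -
    have "(\<lambda>k. q\<^sup>2 * r ^ k * sqnorm x) \<longlonglongrightarrow> q\<^sup>2 * 0 * sqnorm x"
      using r by (intro tendsto_intros LIMSEQ_power_zero) auto
    then have "sqnorm (X n x) \<le> 0"
      using iterated by (intro tendsto_lowerbound[of "\<lambda>k. q\<^sup>2 * r ^ k * sqnorm x"]) auto
    then show ?thesis
      by (simp add: sqnorm_le_0_iff)
  qed
  then show False
    using nonzero by auto
qed

lemma sqnorm_X_n_funpow_ge: "sqnorm v - defect v / (1 - q\<^sup>2) \<le> sqnorm ((X n ^^ m) v)"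
proof -
  have defect_funpow: "defect ((X n ^^ k) v) \<le> (q\<^sup>2) ^ k * defect v" for k
  proof (induction k)
    case (Suc k)
    have "defect ((X n ^^ Suc k) v) \<le> q\<^sup>2 * 1 * defect ((X n ^^ k) v)"
      using defect_X_n_le[of 1] sqnorm_X_n_le by simp
    also have "\<dots> \<le> q\<^sup>2 * ((q\<^sup>2) ^ k * defect v)"
      using Suc sq_q_bounds by simp
    finally show ?case by simp
  qed simp
  have partial: "sqnorm v - defect v * (1 - (q\<^sup>2) ^ k) / (1 - q\<^sup>2) \<le> sqnorm ((X n ^^ k) v)" for k
  proof (induction k)
    case (Suc k)
    have "sqnorm v - defect v * (1 - (q\<^sup>2) ^ Suc k) / (1 - q\<^sup>2)
        = sqnorm v - defect v * (1 - (q\<^sup>2) ^ k) / (1 - q\<^sup>2) - (q\<^sup>2) ^ k * defect v"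
      using sq_q_bounds by (simp add: field_simps)
    also have "\<dots> \<le> sqnorm ((X n ^^ k) v) - defect ((X n ^^ k) v)"
      using Suc defect_funpow[of k] by linarith
    also have "\<dots> = sqnorm ((X n ^^ Suc k) v)"
      using sqnorm_X_n_add_defect[of "(X n ^^ k) v"] by simp
    finally show ?case .
  qed simp
  have "defect v * (1 - (q\<^sup>2) ^ m) / (1 - q\<^sup>2) \<le> defect v / (1 - q\<^sup>2)"
    using sq_q_bounds defect_nonneg[of v] by (simp add: divide_right_mono mult_left_le)
  with partial[of m] show ?thesis
    by linarith
qed

lemma exists_Y_kernel_vector:
  assumes nonzero: "X n \<noteq> (\<lambda>v. 0)"
  shows "\<exists>\<xi>. \<xi> \<noteq> 0 \<and> (\<forall>i\<in>{1..n}. Y i \<xi> = 0)"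
proof -
  obtain v where v: "q\<^sup>2 * sqnorm v < sqnorm (X n v)"
    using exists_sqnorm_X_n_gt[OF nonzero] by blast
  have "0 < sqnorm v - defect v / (1 - q\<^sup>2)"
  proof -
    have "defect v < (1 - q\<^sup>2) * sqnorm v"
      using v sqnorm_X_n_add_defect[of v] by (simp add: algebra_simps)
    moreover have "0 < 1 - q\<^sup>2"
      using sq_q_bounds by simp
    ultimately show ?thesis
      by (simp add: pos_divide_less_eq mult.commute)
  qed
  then obtain w where "w \<noteq> 0" and "sqnorm (X n w) = sqnorm w"
    using normal_contraction.exists_isometric_vector[OF normal_contraction_X_n _ sqnorm_X_n_funpow_ge]
    by blast
  moreover from this have "defect w = 0"
    using sqnorm_X_n_add_defect[of w] by simp
  then have "Y i w = 0" if "i \<in> {1..n}" for i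
    using that sqnorm_nonneg sqnorm_eq_0_iff
    unfolding defect_def by (simp add: sum_nonneg_eq_0_iff)
  ultimately show ?thesis
    by blast
qed

end

theorem lemma1p6:
  fixes scaleC :: "complex \<Rightarrow> 'h::ab_group_add \<Rightarrow> 'h"
    and cinner :: "'h \<Rightarrow> 'h \<Rightarrow> complex"
    and n :: nat and q :: real
    and X Xs Y Ys :: "nat \<Rightarrow> 'h \<Rightarrow> 'h"
  assumes "complex_hilbert scaleC cinner"
    and "0 < q" and "q < 1" and "1 \<le> n"
    and "sigma_rep scaleC cinner n q X Xs Y Ys"
    and "irreducible_rep scaleC cinner n X Xs Y Ys"
    and "X n \<noteq> (\<lambda>v. 0)"
  shows "inj (X n) \<and> (\<exists>\<xi>. \<xi> \<noteq> 0 \<and> (\<forall>i\<in>{1..n}. Y i \<xi> = 0))"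
proof -
  interpret sigma_representation scaleC cinner n q X Xs Y Ys
    using assms by (simp add: sigma_representation_def sigma_representation_axioms_def)
  show ?thesis
    using X_n_injective[OF assms(6,7)] exists_Y_kernel_vector[OF assms(7)] by blast
qed

end
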